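(* Let $\mathcal S=\{1,\dots,S\}$ be a finite state space, let $X=(X_t)_{t\in\mathbb N}$ be a discrete-time process with values in $\mathcal S$, and let $\boldsymbol Z$ be a random covariate vector (not depending on $t$) with support $\mathcal Z$. Assume: (i) for every $\boldsymbol z\in\mathcal Z$, conditionally on $\boldsymbol Z=\boldsymbol z$, $X$ is a homogeneous, irreducible and aperiodic Markov chain of order 1 with transition probabilities $p_{ij}(\boldsymbol z)=\mathbb P(X_{t+1}=j\mid X_t=i,\boldsymbol Z=\boldsymbol z)$ for all $t\in\mathbb N$, $i,j\in\mathcal S$, and transition matrix $\boldsymbol P(\boldsymbol z)=(p_{ij}(\boldsymbol z))_{i,j}$; (ii) $T_0$ is not random, and $0\le T_0<T_1<T_2<\cdots$ are integer observation times with gaps $\tau_k=T_k-T_{k-1}\in\mathbb N^*$, $k\ge1$; set $Y_k=X_{T_k}$; (iii) the sequence $(\tau_k)_{k\ge1}$ is conditionally independent of $X$ given $\boldsymbol Z$; (iv) for every $\boldsymbol z\in\mathcal Z$, the positive integer-valued variables $\tau_k$, $k\ge1$, are conditionally independent and have the same conditional distribution given $\boldsymbol Z=\boldsymbol z$. Then: (a) for every integer $k\ge1$, $\boldsymbol z\in\mathcal Z$, $i_{k-1},\dots,i_1\in\mathcal S$, $\ell'_k,\dots,\ell'_1\in\mathbb N^*$, and all $i,j\in\mathcal S$, $\ell\in\mathbb N^*$, $$\mathbb P(Y_{k+1}=j,\tau_{k+1}=\ell\mid Y_k=i,\tau_k=\ell'_k,Y_{k-1}=i_{k-1},\tau_{k-1}=\ell'_{k-1},\dots,Y_1=i_1,\tau_1=\ell'_1,\boldsymbol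 Z=\boldsymbol z)=\mathbb P(Y_{k+1}=j,\tau_{k+1}=\ell\mid Y_k=i,\boldsymbol Z=\boldsymbol z);$$ (b) for every $\boldsymbol z\in\mathcal Z$, all integers $t<t'$, all $k\in\mathbb N$ and $i,j\in\mathcal S$, $$\mathbb P(X_{T_{k+1}}=j\mid X_{T_k}=i,T_{k+1}=t',T_k=t,\boldsymbol Z=\boldsymbol z)=\big(\boldsymbol P^{t'-t}(\boldsymbol z)\big)_{ij};$$ (c) for every $\boldsymbol z\in\mathcal Z$, the conditional distribution of $\tau_{k+1}$ given $Y_k$ and $\boldsymbol Z=\boldsymbol z$ is the same for all $k\in\mathbb N$.
   Context: $\boldsymbol P^{m}(\boldsymbol z)$ denotes the $m$-th matrix power of $\boldsymbol P(\boldsymbol z)$. Conditional probabilities given $\boldsymbol Z=\boldsymbol z$ are understood for $\boldsymbol z$ in the support of $\boldsymbol Z$. *)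

theory Defs
  imports "HOL-Probability.Probability"
begin

definition cprob :: "'a measure \<Rightarrow> 'a set \<Rightarrow> 'a set \<Rightarrow> real" where
  "cprob M A B = measure M (A \<inter> B) / measure M B"

fun mpow :: "('s::finite \<Rightarrow> 's \<Rightarrow> real) \<Rightarrow> nat \<Rightarrow> 's \<Rightarrow> 's \<Rightarrow> real" where
  "mpow P 0 = (\<lambda>i j. if i = j then 1 else 0)"
| "mpow P (Suc m) = (\<lambda>i j. \<Sum>k\<in>UNIV. mpow P m i k * P k j)"

definition stochastic_matrix :: "('s::finite \<Rightarrow> 's \<Rightarrow> real) \<Rightarrow> bool" where
  "stochastic_matrix P \<longleftrightarrow> (\<forall>i j. 0 \<le> P i j) \<and> (\<forall>i. (\<Sum>j\<in>UNIV. P i j) = 1)"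

definition hom_markov1 :: "'a measure \<Rightarrow> (nat \<Rightarrow> 'a \<Rightarrow> 's::finite) \<Rightarrow> ('s \<Rightarrow> 's \<Rightarrow> real) \<Rightarrow> bool" where
  "hom_markov1 M X P \<longleftrightarrow> stochastic_matrix P \<and>
     (\<forall>t (h::nat \<Rightarrow> 's) j. measure M {\<omega>\<in>space M. \<forall>s\<le>t. X s \<omega> = h s} > 0 \<longrightarrow>
        cprob M {\<omega>\<in>space M. X (Suc t) \<omega> = j} {\<omega>\<in>space M. \<forall>s\<le>t. X s \<omega> = h s} = P (h t) j)"

definition irreducible_mat :: "('s::finite \<Rightarrow> 's \<Rightarrow> real) \<Rightarrow> bool" where
  "irreducible_mat P \<longleftrightarrow> (\<forall>i j. \<exists>n. mpow P n i j > 0)"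

definition aperiodic_mat :: "('s::finite \<Rightarrow> 's \<Rightarrow> real) \<Rightarrow> bool" where
  "aperiodic_mat P \<longleftrightarrow> (\<forall>i. Gcd {n. 0 < n \<and> mpow P n i i > 0} = 1)"

definition obs_time :: "nat \<Rightarrow> (nat \<Rightarrow> 'a \<Rightarrow> nat) \<Rightarrow> nat \<Rightarrow> 'a \<Rightarrow> nat" where
  "obs_time t0 \<tau> k \<omega> = t0 + (\<Sum>m\<in>{1..k}. \<tau> m \<omega>)"

end

theory Submission
  imports Defs
begin

text \<open>
  Fix z and work under K z, where the gaps are i.i.d. and independent of the whole path of X.
  Since T_k is a function of the first k gaps, the event {Y_k = i} splits, according to the
  value t of T_k, into the countable disjoint union of the events {T_k = t} \<inter> {X_t = i}, each
  the intersection of a gap event with a path event. Independence factorises the probability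
  of such intersections, and the Markov property, iterated along the path, contributes the
  factor P^m(i,j) for a later state X_{t+m}. This gives
    P(Y_k = i, \<tau>_{k+1} = l, X_{T_k+m} = j) = P(\<tau>_{k+1} = l) P^m(i,j) P(Y_k = i),
  and the same factorisation with a complete history of states and gaps in place of {Y_k = i}.
  The cases m = l and m = 0 give (a) and (c); (b) is the same computation with T_k and
  T_{k+1} fixed.
\<close>

lemma sets_PiM_count_space_finite:
  assumes "finite F"
  shows "S \<inter> space (Pi\<^sub>M F (\<lambda>_. count_space (UNIV::'b::countable set)))
           \<in> sets (Pi\<^sub>M F (\<lambda>_. count_space UNIV))"
proof -
  let ?E = "S \<inter> Pi\<^sub>E F (\<lambda>_. UNIV::'b set)"
  have "countable ?E"
    using countable_PiE[OF assms, of "\<lambda>_. UNIV::'b set"] by (rule countable_subset[rotated]) auto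
  then have "(\<Union>c\<in>?E. Pi\<^sub>E F (\<lambda>i. {c i})) \<in> sets (Pi\<^sub>M F (\<lambda>_. count_space (UNIV::'b set)))"
    using assms by (intro sets.countable_UN') auto
  moreover have "(\<Union>c\<in>?E. Pi\<^sub>E F (\<lambda>i. {c i})) = ?E"
    by (auto simp: PiE_def extensional_def Pi_def) (metis ext)
  ultimately show ?thesis by (simp add: space_PiM)
qed

lemma (in prob_space) prob_UN_countable_proportional:
  assumes I: "countable I"
    and A: "\<And>i. i \<in> I \<Longrightarrow> A i \<in> events" and B: "\<And>i. i \<in> I \<Longrightarrow> B i \<in> events"
    and "disjoint_family_on A I" "disjoint_family_on B I"
    and ratio: "\<And>i. i \<in> I \<Longrightarrow> prob (A i) = c * prob (B i)" and "c \<ge> 0"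
  shows "prob (\<Union>i\<in>I. A i) = c * prob (\<Union>i\<in>I. B i)"
proof -
  have "ennreal (prob (\<Union>i\<in>I. A i)) = (\<integral>\<^sup>+i. emeasure M (A i) \<partial>count_space I)"
    using emeasure_UN_countable[OF A I \<open>disjoint_family_on A I\<close>] by (simp add: emeasure_eq_measure)
  also have "\<dots> = (\<integral>\<^sup>+i. ennreal c * emeasure M (B i) \<partial>count_space I)"
    by (intro nn_integral_cong) (simp add: emeasure_eq_measure ratio ennreal_mult \<open>c \<ge> 0\<close>)
  also have "\<dots> = ennreal c * emeasure M (\<Union>i\<in>I. B i)"
    by (simp add: nn_integral_cmult emeasure_UN_countable[OF B I \<open>disjoint_family_on B I\<close>])
  also have "\<dots> = ennreal (c * prob (\<Union>i\<in>I. B i))"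
    by (simp add: emeasure_eq_measure ennreal_mult \<open>c \<ge> 0\<close>)
  finally show ?thesis by (simp add: \<open>c \<ge> 0\<close>)
qed

lemma mpow_nonneg: "stochastic_matrix P \<Longrightarrow> 0 \<le> mpow P n i j"
  by (induction n arbitrary: j) (auto simp: stochastic_matrix_def intro!: sum_nonneg)

lemma obs_time_Suc: "obs_time t0 \<tau> (Suc k) \<omega> = obs_time t0 \<tau> k \<omega> + \<tau> (Suc k) \<omega>"
  by (simp add: obs_time_def)

lemma measure_level_set_eq_of_distr_eq:
  assumes "f \<in> measurable M (count_space UNIV)" "g \<in> measurable M (count_space UNIV)"
    and "distr M (count_space UNIV) f = distr M (count_space UNIV) g"
  shows "measure M {\<omega>\<in>space M. f \<omega> = x} = measure M {\<omega>\<in>space M. g \<omega> = x}"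
proof -
  have "measure M {\<omega>\<in>space M. h \<omega> = x} = measure (distr M (count_space UNIV) h) {x}"
    if "h \<in> measurable M (count_space UNIV)" for h
  proof -
    have "h -` {x} \<inter> space M = {\<omega>\<in>space M. h \<omega> = x}" by auto
    then show ?thesis using that by (simp add: measure_distr)
  qed
  then show ?thesis using assms by metis
qed

locale sampled_markov_chain = prob_space Q for Q :: "'a measure" +
  fixes X :: "nat \<Rightarrow> 'a \<Rightarrow> 's::finite" and P :: "'s \<Rightarrow> 's \<Rightarrow> real"
    and t0 :: nat and \<tau> :: "nat \<Rightarrow> 'a \<Rightarrow> nat"
  assumes X_measurable[measurable]: "\<And>t. X t \<in> measurable Q (count_space UNIV)"
    and \<tau>_measurable[measurable]: "\<And>k. \<tau> k \<in> measurable Q (count_space UNIV)"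
    and markov: "hom_markov1 Q X P"
    and indep_gaps_chain: "indep_set
         {(\<lambda>\<omega>. restrict (\<lambda>k. \<tau> k \<omega>) {1..}) -` A \<inter> space Q | A. A \<in> sets (Pi\<^sub>M {1..} (\<lambda>_. count_space (UNIV::nat set)))}
         {(\<lambda>\<omega> t. X t \<omega>) -` B \<inter> space Q | B. B \<in> sets (Pi\<^sub>M (UNIV::nat set) (\<lambda>_. count_space (UNIV::'s set)))}"
    and indep_gaps: "indep_vars (\<lambda>_. count_space UNIV) \<tau> {1..}"
begin

abbreviation T :: "nat \<Rightarrow> 'a \<Rightarrow> nat" where
  "T \<equiv> obs_time t0 \<tau>"

abbreviation Y :: "nat \<Rightarrow> 'a \<Rightarrow> 's" where
  "Y k \<omega> \<equiv> X (T k \<omega>) \<omega>"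

definition path_event :: "nat \<Rightarrow> (nat \<Rightarrow> 's) set \<Rightarrow> 'a set" where
  "path_event u H = {\<omega>\<in>space Q. restrict (\<lambda>s. X s \<omega>) {..u} \<in> H}"

definition gaps_event :: "nat \<Rightarrow> (nat \<Rightarrow> nat) set \<Rightarrow> 'a set" where
  "gaps_event n G = {\<omega>\<in>space Q. restrict (\<lambda>m. \<tau> m \<omega>) {1..n} \<in> G}"

lemma path_event_sets[measurable]: "path_event u H \<in> events"
proof -
  have "path_event u H = (\<lambda>\<omega>. restrict (\<lambda>s. X s \<omega>) {..u}) -`
          (H \<inter> space (Pi\<^sub>M {..u} (\<lambda>_. count_space UNIV))) \<inter> space Q"
    by (auto simp: path_event_def space_PiM)
  also have "\<dots> \<in> events"
    by (rule measurable_sets[OF measurable_restrict[OF X_measurable] sets_PiM_count_space_finite]) simp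
  finally show ?thesis .
qed

lemma gaps_event_sets[measurable]: "gaps_event n G \<in> events"
proof -
  have "gaps_event n G = (\<lambda>\<omega>. restrict (\<lambda>m. \<tau> m \<omega>) {1..n}) -`
          (G \<inter> space (Pi\<^sub>M {1..n} (\<lambda>_. count_space UNIV))) \<inter> space Q"
    by (auto simp: gaps_event_def space_PiM)
  also have "\<dots> \<in> events"
    by (rule measurable_sets[OF measurable_restrict[OF \<tau>_measurable] sets_PiM_count_space_finite]) simp
  finally show ?thesis .
qed

lemma prob_gaps_Int_path: "prob (gaps_event n G \<inter> path_event u H) = prob (gaps_event n G) * prob (path_event u H)"
proof (rule indep_setD[OF indep_gaps_chain])
  let ?G = "(\<lambda>f. restrict f {1..n}) -` (G \<inter> space (Pi\<^sub>M {1..n} (\<lambda>_. count_space UNIV)))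
              \<inter> space (Pi\<^sub>M {1..} (\<lambda>_. count_space (UNIV::nat set)))"
  have "?G \<in> sets (Pi\<^sub>M {1..} (\<lambda>_. count_space UNIV))"
    by (rule measurable_sets[OF measurable_restrict_subset sets_PiM_count_space_finite]) auto
  moreover have "gaps_event n G = (\<lambda>\<omega>. restrict (\<lambda>k. \<tau> k \<omega>) {1..}) -` ?G \<inter> space Q"
    by (auto simp: gaps_event_def space_PiM Int_absorb1)
  ultimately show "gaps_event n G \<in> {(\<lambda>\<omega>. restrict (\<lambda>k. \<tau> k \<omega>) {1..}) -` A \<inter> space Q | A.
                     A \<in> sets (Pi\<^sub>M {1..} (\<lambda>_. count_space (UNIV::nat set)))}"
    by blast
  let ?H = "(\<lambda>f. restrict f {..u}) -` (H \<inter> space (Pi\<^sub>M {..u} (\<lambda>_. count_space UNIV)))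
              \<inter> space (Pi\<^sub>M UNIV (\<lambda>_. count_space (UNIV::'s set)))"
  have "?H \<in> sets (Pi\<^sub>M UNIV (\<lambda>_. count_space UNIV))"
    by (rule measurable_sets[OF measurable_restrict_subset sets_PiM_count_space_finite]) auto
  moreover have "path_event u H = (\<lambda>\<omega> t. X t \<omega>) -` ?H \<inter> space Q"
    by (auto simp: path_event_def space_PiM)
  ultimately show "path_event u H \<in> {(\<lambda>\<omega> t. X t \<omega>) -` B \<inter> space Q | B.
                     B \<in> sets (Pi\<^sub>M (UNIV::nat set) (\<lambda>_. count_space (UNIV::'s set)))}"
    by blast
qed

lemma prob_gaps_Int_next_gap:
  "prob (gaps_event k G \<inter> {\<omega>\<in>space Q. \<tau> (Suc k) \<omega> = l})
   = prob (gaps_event k G) * prob {\<omega>\<in>space Q. \<tau> (Suc k) \<omega> = l}"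
proof -
  let ?C = "\<lambda>J. Pi\<^sub>M J (\<lambda>_. count_space (UNIV::nat set))"
  have "indep_var (?C {1..k}) (\<lambda>\<omega>. restrict (\<lambda>m. \<tau> m \<omega>) {1..k})
                  (?C {Suc k}) (\<lambda>\<omega>. restrict (\<lambda>m. \<tau> m \<omega>) {Suc k})"
    by (rule indep_var_restrict[OF indep_gaps]) auto
  from indep_varD[OF this sets_PiM_count_space_finite sets_PiM_count_space_finite,
      of G "{f. f (Suc k) = l}"]
  show ?thesis
    by (simp add: gaps_event_def space_PiM vimage_def Int_def PiE_iff conj_commute conj_left_commute)
qed

lemma stochastic_matrix_P: "stochastic_matrix P"
  using markov by (simp add: hom_markov1_def)

lemma path_event_singleton:
  "h \<in> Pi\<^sub>E {..u} (\<lambda>_. UNIV) \<Longrightarrow> path_event u {h} = {\<omega>\<in>space Q. \<forall>s\<le>u. X s \<omega> = h s}"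
  by (auto simp: path_event_def PiE_def extensional_def fun_eq_iff)

lemma path_event_extend:
  "path_event u H \<inter> {\<omega>\<in>space Q. X (u + m) \<omega> = j}
   = path_event (u + m) {h. restrict h {..u} \<in> H \<and> h (u + m) = j}"
proof -
  have "{..u + m} \<inter> {..u} = {..u}" by auto
  then show ?thesis by (auto simp: path_event_def)
qed

lemma gaps_event_extend:
  "gaps_event k G \<inter> {\<omega>\<in>space Q. \<tau> (Suc k) \<omega> = l}
   = gaps_event (Suc k) {c. restrict c {1..k} \<in> G \<and> c (Suc k) = l}"
proof -
  have "{1..Suc k} \<inter> {1..k} = {1..k}" by auto
  then show ?thesis by (auto simp: gaps_event_def)
qed

lemma prob_path_step:
  assumes "\<forall>h\<in>H. h u = i"
  shows "prob (path_event u H \<inter> {\<omega>\<in>space Q. X (Suc u) \<omega> = j}) = P i j * prob (path_event u H)"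
proof -
  let ?I = "H \<inter> Pi\<^sub>E {..u} (\<lambda>_. UNIV)"
  let ?next = "{\<omega>\<in>space Q. X (Suc u) \<omega> = j}"
  have "path_event u H = (\<Union>h\<in>?I. path_event u {h})"
    by (auto simp: path_event_def)
  moreover have "path_event u H \<inter> ?next = (\<Union>h\<in>?I. path_event u {h} \<inter> ?next)"
    by (auto simp: path_event_def)
  moreover have "prob (\<Union>h\<in>?I. path_event u {h} \<inter> ?next) = P i j * prob (\<Union>h\<in>?I. path_event u {h})"
  proof (rule prob_UN_countable_proportional)
    show "countable ?I"
      by (intro countable_finite finite_Int disjI2 finite_PiE) auto
    show "disjoint_family_on (\<lambda>h. path_event u {h} \<inter> ?next) ?I"
      "disjoint_family_on (\<lambda>h. path_event u {h}) ?I"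
      by (auto simp: disjoint_family_on_def path_event_def)
    show "0 \<le> P i j"
      using stochastic_matrix_P by (simp add: stochastic_matrix_def)
    fix h assume "h \<in> ?I"
    then have h: "h \<in> Pi\<^sub>E {..u} (\<lambda>_. UNIV)" and "h u = i"
      using assms by auto
    show "prob (path_event u {h} \<inter> ?next) = P i j * prob (path_event u {h})"
    proof (cases "prob (path_event u {h}) = 0")
      case True
      then show ?thesis
        using finite_measure_mono[of "path_event u {h} \<inter> ?next" "path_event u {h}"]
        by (simp add: measure_le_0_iff)
    next
      case False
      then have "prob (path_event u {h}) > 0"
        using measure_nonneg[of Q "path_event u {h}"] by linarith
      then have "cprob Q ?next (path_event u {h}) = P (h u) j"
        using markov unfolding hom_markov1_def path_event_singleton[OF h] by blast
      then show ?thesis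
        using False \<open>h u = i\<close> by (simp add: cprob_def field_simps Int_commute)
    qed
  qed auto
  ultimately show ?thesis by simp
qed

lemma prob_path_steps:
  assumes "\<forall>h\<in>H. h u = i"
  shows "prob (path_event u H \<inter> {\<omega>\<in>space Q. X (u + m) \<omega> = j}) = mpow P m i j * prob (path_event u H)"
proof (induction m arbitrary: j)
  case 0
  have "path_event u H \<inter> {\<omega>\<in>space Q. X (u + 0) \<omega> = j} = (if i = j then path_event u H else {})"
    using assms by (auto simp: path_event_def)
  then show ?case by simp
next
  case (Suc m)
  let ?H = "\<lambda>k. {h. restrict h {..u} \<in> H \<and> h (u + m) = k}"
  have "path_event u H \<inter> {\<omega>\<in>space Q. X (u + Suc m) \<omega> = j}
        = (\<Union>k. path_event (u + m) (?H k) \<inter> {\<omega>\<in>space Q. X (Suc (u + m)) \<omega> = j})"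
    by (auto simp: path_event_extend[symmetric])
  also have "prob \<dots> = (\<Sum>k\<in>UNIV. prob (path_event (u + m) (?H k) \<inter> {\<omega>\<in>space Q. X (Suc (u + m)) \<omega> = j}))"
  proof (rule measure_finite_Union)
    show "disjoint_family (\<lambda>k. path_event (u + m) (?H k) \<inter> {\<omega>\<in>space Q. X (Suc (u + m)) \<omega> = j})"
      by (auto simp: disjoint_family_on_def path_event_def)
  qed (auto simp: emeasure_eq_measure)
  also have "\<dots> = (\<Sum>k\<in>UNIV. P k j * (mpow P m i k * prob (path_event u H)))"
  proof (intro sum.cong refl)
    fix k
    have "\<forall>h\<in>?H k. h (u + m) = k" by simp
    from prob_path_step[OF this, of j]
    show "prob (path_event (u + m) (?H k) \<inter> {\<omega>\<in>space Q. X (Suc (u + m)) \<omega> = j})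
          = P k j * (mpow P m i k * prob (path_event u H))"
      by (simp add: path_event_extend[symmetric] Suc.IH)
  qed
  also have "\<dots> = mpow P (Suc m) i j * prob (path_event u H)"
    by (simp add: sum_distrib_left sum_distrib_right mult_ac)
  finally show ?case .
qed

lemma prob_gaps_next_gap_path_steps:
  assumes "\<forall>h\<in>H. h u = i"
  shows "prob (gaps_event k G \<inter> {\<omega>\<in>space Q. \<tau> (Suc k) \<omega> = l}
                \<inter> (path_event u H \<inter> {\<omega>\<in>space Q. X (u + m) \<omega> = j}))
         = prob {\<omega>\<in>space Q. \<tau> (Suc k) \<omega> = l} * mpow P m i j * prob (gaps_event k G \<inter> path_event u H)"
  unfolding gaps_event_extend path_event_extend prob_gaps_Int_path
  unfolding gaps_event_extend[symmetric] path_event_extend[symmetric]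
  by (simp add: prob_gaps_Int_next_gap prob_path_steps[OF assms] prob_gaps_Int_path)

lemma obs_time_event:
  "{\<omega>\<in>space Q. T k \<omega> = t} = gaps_event k {c. t0 + sum c {1..k} = t}"
  by (auto simp: gaps_event_def obs_time_def)

lemma obs_time_event_sets[measurable]: "{\<omega>\<in>space Q. T k \<omega> = t} \<in> events"
  unfolding obs_time_event by simp

lemma state_event_eq_UN:
  "{\<omega>\<in>space Q. Y k \<omega> = i} = (\<Union>t. {\<omega>\<in>space Q. T k \<omega> = t} \<inter> path_event t {h. h t = i})"
  by (auto simp: path_event_def)

lemma state_event_sets[measurable]: "{\<omega>\<in>space Q. Y k \<omega> = i} \<in> events"
  unfolding state_event_eq_UN by (intro sets.countable_UN) auto

lemma prob_state_next_gap_steps: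
  "prob {\<omega>\<in>space Q. Y k \<omega> = i \<and> \<tau> (Suc k) \<omega> = l \<and> X (T k \<omega> + m) \<omega> = j}
   = prob {\<omega>\<in>space Q. \<tau> (Suc k) \<omega> = l} * mpow P m i j * prob {\<omega>\<in>space Q. Y k \<omega> = i}"
proof -
  let ?gap = "{\<omega>\<in>space Q. \<tau> (Suc k) \<omega> = l}"
  let ?c = "prob ?gap * mpow P m i j"
  let ?B = "\<lambda>t. {\<omega>\<in>space Q. T k \<omega> = t} \<inter> path_event t {h. h t = i}"
  let ?A = "\<lambda>t. {\<omega>\<in>space Q. T k \<omega> = t} \<inter> ?gap
                 \<inter> (path_event t {h. h t = i} \<inter> {\<omega>\<in>space Q. X (t + m) \<omega> = j})"
  have "{\<omega>\<in>space Q. Y k \<omega> = i \<and> \<tau> (Suc k) \<omega> = l \<and> X (T k \<omega> + m) \<omega> = j} = (\<Union>t. ?A t)"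
    by (auto simp: path_event_def)
  moreover note state_event_eq_UN
  moreover have "prob (\<Union>t. ?A t) = ?c * prob (\<Union>t. ?B t)"
  proof (rule prob_UN_countable_proportional)
    show "disjoint_family ?A" "disjoint_family ?B"
      by (auto simp: disjoint_family_on_def)
    show "prob (?A t) = ?c * prob (?B t)" for t
      unfolding obs_time_event by (rule prob_gaps_next_gap_path_steps) simp
  qed (auto simp: mpow_nonneg stochastic_matrix_P)
  ultimately show ?thesis by simp
qed

lemma cprob_next_gap_given_state:
  assumes "prob {\<omega>\<in>space Q. Y k \<omega> = i} > 0"
  shows "cprob Q {\<omega>\<in>space Q. \<tau> (Suc k) \<omega> = l} {\<omega>\<in>space Q. Y k \<omega> = i}
         = prob {\<omega>\<in>space Q. \<tau> (Suc k) \<omega> = l}"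
proof -
  have "{\<omega>\<in>space Q. \<tau> (Suc k) \<omega> = l} \<inter> {\<omega>\<in>space Q. Y k \<omega> = i}
        = {\<omega>\<in>space Q. Y k \<omega> = i \<and> \<tau> (Suc k) \<omega> = l \<and> X (T k \<omega> + 0) \<omega> = i}"
    by auto
  then show ?thesis
    using prob_state_next_gap_steps[of k i l 0 i] assms by (simp add: cprob_def)
qed

lemma cprob_next_given_state:
  assumes "prob {\<omega>\<in>space Q. Y k \<omega> = i} > 0"
  shows "cprob Q {\<omega>\<in>space Q. Y (Suc k) \<omega> = j \<and> \<tau> (Suc k) \<omega> = l} {\<omega>\<in>space Q. Y k \<omega> = i}
         = prob {\<omega>\<in>space Q. \<tau> (Suc k) \<omega> = l} * mpow P l i j"
proof -
  have "{\<omega>\<in>space Q. Y (Suc k) \<omega> = j \<and> \<tau> (Suc k) \<omega> = l} \<inter> {\<omega>\<in>space Q. Y k \<omega> = i}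
        = {\<omega>\<in>space Q. Y k \<omega> = i \<and> \<tau> (Suc k) \<omega> = l \<and> X (T k \<omega> + l) \<omega> = j}"
    by (auto simp: obs_time_Suc)
  then show ?thesis
    using prob_state_next_gap_steps[of k i l l j] assms by (simp add: cprob_def)
qed

lemma cprob_next_given_history:
  assumes "k \<ge> 1"
    and pos: "prob {\<omega>\<in>space Q. \<forall>m\<in>{1..k}. Y m \<omega> = ih m \<and> \<tau> m \<omega> = l' m} > 0"
  shows "cprob Q {\<omega>\<in>space Q. Y (Suc k) \<omega> = j \<and> \<tau> (Suc k) \<omega> = l}
                 {\<omega>\<in>space Q. \<forall>m\<in>{1..k}. Y m \<omega> = ih m \<and> \<tau> m \<omega> = l' m}
         = prob {\<omega>\<in>space Q. \<tau> (Suc k) \<omega> = l} * mpow P l (ih k) j"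
proof -
  define hist_time where "hist_time m = t0 + sum l' {1..m}" for m
  let ?hist = "{\<omega>\<in>space Q. \<forall>m\<in>{1..k}. Y m \<omega> = ih m \<and> \<tau> m \<omega> = l' m}"
  let ?G = "{c. \<forall>m\<in>{1..k}. c m = l' m}"
  let ?H = "{h. \<forall>m\<in>{1..k}. h (hist_time m) = ih m}"
  have hist_time_mono: "m \<le> k \<Longrightarrow> hist_time m \<le> hist_time k" for m
    unfolding hist_time_def by (auto intro!: sum_mono2)
  have T_hist: "T m \<omega> = hist_time m" if "\<forall>m\<in>{1..k}. \<tau> m \<omega> = l' m" "m \<le> k" for m \<omega>
    unfolding obs_time_def hist_time_def using that by (auto intro!: sum.cong)
  have hist: "?hist = gaps_event k ?G \<inter> path_event (hist_time k) ?H"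
    using T_hist hist_time_mono by (auto simp: gaps_event_def path_event_def) (metis atLeastAtMost_iff)+
  have "{\<omega>\<in>space Q. Y (Suc k) \<omega> = j \<and> \<tau> (Suc k) \<omega> = l} \<inter> ?hist
        = ?hist \<inter> {\<omega>\<in>space Q. \<tau> (Suc k) \<omega> = l} \<inter> {\<omega>\<in>space Q. X (hist_time k + l) \<omega> = j}"
    using T_hist by (auto simp: obs_time_Suc)
  also have "\<dots> = gaps_event k ?G \<inter> {\<omega>\<in>space Q. \<tau> (Suc k) \<omega> = l}
                    \<inter> (path_event (hist_time k) ?H \<inter> {\<omega>\<in>space Q. X (hist_time k + l) \<omega> = j})"
    unfolding hist by blast
  moreover have "\<forall>h\<in>?H. h (hist_time k) = ih k"
    using \<open>k \<ge> 1\<close> by auto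
  ultimately show ?thesis
    using pos unfolding cprob_def hist by (simp add: prob_gaps_next_gap_path_steps)
qed

lemma cprob_sampled_transition:
  assumes "t < t'"
    and pos: "prob {\<omega>\<in>space Q. X (T k \<omega>) \<omega> = i \<and> T (Suc k) \<omega> = t' \<and> T k \<omega> = t} > 0"
  shows "cprob Q {\<omega>\<in>space Q. X (T (Suc k) \<omega>) \<omega> = j}
                 {\<omega>\<in>space Q. X (T k \<omega>) \<omega> = i \<and> T (Suc k) \<omega> = t' \<and> T k \<omega> = t}
         = mpow P (t' - t) i j"
proof -
  let ?G = "{c. t0 + sum c {1..k} = t \<and> t0 + sum c {1..Suc k} = t'}"
  let ?H = "{h. h t = i}"
  have cond: "{\<omega>\<in>space Q. X (T k \<omega>) \<omega> = i \<and> T (Suc k) \<omega> = t' \<and> T k \<omega> = t}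
              = gaps_event (Suc k) ?G \<inter> path_event t ?H"
    by (auto simp: gaps_event_def path_event_def obs_time_def)
  have num: "{\<omega>\<in>space Q. X (T (Suc k) \<omega>) \<omega> = j} \<inter> (gaps_event (Suc k) ?G \<inter> path_event t ?H)
             = gaps_event (Suc k) ?G \<inter> (path_event t ?H \<inter> {\<omega>\<in>space Q. X (t + (t' - t)) \<omega> = j})"
    using \<open>t < t'\<close> by (auto simp: gaps_event_def path_event_def obs_time_def)
  have "prob (gaps_event (Suc k) ?G \<inter> (path_event t ?H \<inter> {\<omega>\<in>space Q. X (t + (t' - t)) \<omega> = j}))
        = prob (gaps_event (Suc k) ?G) * (mpow P (t' - t) i j * prob (path_event t ?H))"
    unfolding path_event_extend prob_gaps_Int_path
    unfolding path_event_extend[symmetric] by (simp add: prob_path_steps)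
  then show ?thesis
    using pos unfolding cprob_def cond num prob_gaps_Int_path by auto
qed

lemma cprob_next_history_eq_state:
  assumes "k \<ge> 1"
    and pos: "prob {\<omega>\<in>space Q. \<forall>m\<in>{1..k}. Y m \<omega> = ih m \<and> \<tau> m \<omega> = l' m} > 0"
  shows "cprob Q {\<omega>\<in>space Q. Y (Suc k) \<omega> = j \<and> \<tau> (Suc k) \<omega> = l}
                 {\<omega>\<in>space Q. \<forall>m\<in>{1..k}. Y m \<omega> = ih m \<and> \<tau> m \<omega> = l' m}
         = cprob Q {\<omega>\<in>space Q. Y (Suc k) \<omega> = j \<and> \<tau> (Suc k) \<omega> = l} {\<omega>\<in>space Q. Y k \<omega> = ih k}"
proof -
  have "{\<omega>\<in>space Q. \<forall>m\<in>{1..k}. Y m \<omega> = ih m \<and> \<tau> m \<omega> = l' m} \<subseteq> {\<omega>\<in>space Q. Y k \<omega> = ih k}"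
    using \<open>k \<ge> 1\<close> by auto
  then have "prob {\<omega>\<in>space Q. Y k \<omega> = ih k} > 0"
    using pos finite_measure_mono[OF _ state_event_sets] by (meson less_le_trans)
  then show ?thesis
    unfolding cprob_next_given_history[OF assms] by (simp add: cprob_next_given_state)
qed

end


theorem lemma1:
  fixes M :: "'a measure" and N :: "'z measure"
    and Z :: "'a \<Rightarrow> 'z" and K :: "'z \<Rightarrow> 'a measure" and Zs :: "'z set"
    and X :: "nat \<Rightarrow> 'a \<Rightarrow> 's::finite" and P :: "'z \<Rightarrow> 's \<Rightarrow> 's \<Rightarrow> real"
    and t0 :: nat and \<tau> :: "nat \<Rightarrow> 'a \<Rightarrow> nat"
  defines "T \<equiv> obs_time t0 \<tau>"
  defines "Y \<equiv> (\<lambda>k \<omega>. X (T k \<omega>) \<omega>)"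
  assumes M: "prob_space M"
    and Zmeas: "Z \<in> measurable M N"
    and Xmeas: "\<And>t. X t \<in> measurable M (count_space UNIV)"
    and taumeas: "\<And>k. \<tau> k \<in> measurable M (count_space UNIV)"
    and taupos: "\<And>k \<omega>. k \<ge> 1 \<Longrightarrow> \<omega> \<in> space M \<Longrightarrow> \<tau> k \<omega> \<ge> 1"
    \<comment> \<open>K is a regular conditional probability of M given Z\<close>
    and Kprob: "\<And>z. prob_space (K z)"
    and Ksets: "\<And>z. sets (K z) = sets M"
    and Kmeas: "\<And>A. A \<in> sets M \<Longrightarrow> (\<lambda>z. measure (K z) A) \<in> borel_measurable N"
    and Kdis: "\<And>A B. A \<in> sets M \<Longrightarrow> B \<in> sets N \<Longrightarrow>
                 measure M (A \<inter> Z -` B \<inter> space M)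
                 = (\<integral>z. indicator B z * measure (K z) A \<partial>distr M N Z)"
    \<comment> \<open>Zs is the support of Z (a set of full Z-measure)\<close>
    and Zs_sets: "Zs \<in> sets N"
    and Zs_full: "measure M (Z -` Zs \<inter> space M) = 1"
    \<comment> \<open>(i)\<close>
    and markov: "\<And>z. z \<in> Zs \<Longrightarrow> hom_markov1 (K z) X (P z)"
    and irred: "\<And>z. z \<in> Zs \<Longrightarrow> irreducible_mat (P z)"
    and aper: "\<And>z. z \<in> Zs \<Longrightarrow> aperiodic_mat (P z)"
    \<comment> \<open>(iii)\<close>
    and indepX: "\<And>z. z \<in> Zs \<Longrightarrow>
       prob_space.indep_set (K z)
         {(\<lambda>\<omega>. restrict (\<lambda>k. \<tau> k \<omega>) {1..}) -` A \<inter> space M | A. A \<in> sets (Pi\<^sub>M {1..} (\<lambda>_. count_space (UNIV::nat set)))}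
         {(\<lambda>\<omega> t. X t \<omega>) -` B \<inter> space M | B. B \<in> sets (Pi\<^sub>M (UNIV::nat set) (\<lambda>_. count_space (UNIV::'s set)))}"
    \<comment> \<open>(iv)\<close>
    and indeptau: "\<And>z. z \<in> Zs \<Longrightarrow> prob_space.indep_vars (K z) (\<lambda>_. count_space UNIV) \<tau> {1..}"
    and identtau: "\<And>z k. z \<in> Zs \<Longrightarrow> k \<ge> 1 \<Longrightarrow>
       distr (K z) (count_space UNIV) (\<tau> k) = distr (K z) (count_space UNIV) (\<tau> 1)"
  shows
    \<comment> \<open>(a)\<close>
    "(\<forall>z\<in>Zs. \<forall>k\<ge>1. \<forall>(ih::nat \<Rightarrow> 's) (l'::nat \<Rightarrow> nat) j l.
        (\<forall>m\<in>{1..k}. l' m \<ge> 1) \<longrightarrow> l \<ge> 1 \<longrightarrow>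
        measure (K z) {\<omega>\<in>space M. \<forall>m\<in>{1..k}. Y m \<omega> = ih m \<and> \<tau> m \<omega> = l' m} > 0 \<longrightarrow>
        cprob (K z) {\<omega>\<in>space M. Y (Suc k) \<omega> = j \<and> \<tau> (Suc k) \<omega> = l}
                    {\<omega>\<in>space M. \<forall>m\<in>{1..k}. Y m \<omega> = ih m \<and> \<tau> m \<omega> = l' m}
        = cprob (K z) {\<omega>\<in>space M. Y (Suc k) \<omega> = j \<and> \<tau> (Suc k) \<omega> = l}
                      {\<omega>\<in>space M. Y k \<omega> = ih k})
     \<and>
    \<comment> \<open>(b)\<close>
     (\<forall>z\<in>Zs. \<forall>t t' k i j. t < t' \<longrightarrow>
        measure (K z) {\<omega>\<in>space M. X (T k \<omega>) \<omega> = i \<and> T (Suc k) \<omega> = t' \<and> T k \<omega> = t} > 0 \<longrightarrow>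
        cprob (K z) {\<omega>\<in>space M. X (T (Suc k) \<omega>) \<omega> = j}
                    {\<omega>\<in>space M. X (T k \<omega>) \<omega> = i \<and> T (Suc k) \<omega> = t' \<and> T k \<omega> = t}
        = mpow (P z) (t' - t) i j)
     \<and>
    \<comment> \<open>(c)\<close>
     (\<forall>z\<in>Zs. \<forall>k k' i l.
        measure (K z) {\<omega>\<in>space M. Y k \<omega> = i} > 0 \<longrightarrow>
        measure (K z) {\<omega>\<in>space M. Y k' \<omega> = i} > 0 \<longrightarrow>
        cprob (K z) {\<omega>\<in>space M. \<tau> (Suc k) \<omega> = l} {\<omega>\<in>space M. Y k \<omega> = i}
        = cprob (K z) {\<omega>\<in>space M. \<tau> (Suc k') \<omega> = l} {\<omega>\<in>space M. Y k' \<omega> = i})"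
proof -
  have space_K: "space (K z) = space M" for z
    using sets_eq_imp_space_eq[OF Ksets] .
  have measurable_K: "measurable (K z) = measurable M" for z
    using measurable_cong_sets[OF Ksets refl] by blast
  have chain: "sampled_markov_chain (K z) X (P z) \<tau>" if "z \<in> Zs" for z
    using Kprob Xmeas taumeas markov[OF that] indepX[OF that] indeptau[OF that]
    by (intro sampled_markov_chain.intro sampled_markov_chain_axioms.intro)
       (simp_all add: space_K measurable_K)
  have next_gap_law: "measure (K z) {\<omega>\<in>space M. \<tau> (Suc k) \<omega> = l} = measure (K z) {\<omega>\<in>space M. \<tau> 1 \<omega> = l}"
    if "z \<in> Zs" for z k l
    using measure_level_set_eq_of_distr_eq[OF _ _ identtau[OF that, of "Suc k"]] taumeas
    by (simp add: measurable_K space_K)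
  show ?thesis
    unfolding Y_def T_def
    apply (intro conjI ballI allI impI)
    subgoal for z
      using sampled_markov_chain.cprob_next_history_eq_state[OF chain] by (simp only: space_K)
    subgoal for z
      using sampled_markov_chain.cprob_sampled_transition[OF chain] by (simp only: space_K)
    subgoal premises prems for z k k' i l
      using next_gap_law[OF prems(1), of k l] next_gap_law[OF prems(1), of k' l]
        sampled_markov_chain.cprob_next_gap_given_state[OF chain[OF prems(1)], unfolded space_K, OF prems(2)]
        sampled_markov_chain.cprob_next_gap_given_state[OF chain[OF prems(1)], unfolded space_K, OF prems(3)]
      by (simp only:)
    done
qed

end
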